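(* Let $(\mathbf c,\mathbf g)\in\mathbf C^5_{\rm aut}$ with $\operatorname{Hom}(N_{\mathbf c},\mathbb G_{\mathbf g})=0$, and let $\mathbf m\in\mathbf M_{\mathbf c}$ be $|N_{\mathbf c}|^+$-free over $(\mathbf c,\mathbf g)$. Then $\operatorname{Hom}(N_{\mathbf c},\mathcal Z(H_{\mathbf m}))\subseteq\operatorname{Hom}(N_{\mathbf c},H_{\mathbf c})$, i.e. every homomorphism $N_{\mathbf c}\to\mathcal Z(H_{\mathbf m})$ has image contained in $H_{\mathbf c}$.
   Context: Groups are not assumed abelian; $\mathcal Z(H)$ is the center of $H$; $J_p$ is the additive group of $p$-adic integers. $\mathbf C^4_{\rm aut}$: tuples $\mathbf c=(L_{\mathbf c},N_{\mathbf c},H_{\mathbf c},h_{\mathbf c},h^*_{\mathbf c},F_{\mathbf c},(Q^{\bar s}_{\mathbf c}),H^*_{\mathbf c},\mathbb P_{\mathbf c})$: $L_{\mathbf c},H_{\mathbf c}$ groups; $F_{\mathbf c}:L_{\mathbf c}\to\operatorname{Aut}(H_{\mathbf c})$ injective homomorphism, $F^\ell_{\mathbf c}:=F_{\mathbf c}(\ell)$; $N_{\mathbf c}\trianglelefteq L_{\mathbf c}$; $h_{\mathbf c}:H_{\mathbf c}\to N_{\mathbf c}$ epimorphism with kernel $\mathcal Z(H_{\mathbf c})$ and $F_{\mathbf c}(h_{\mathbf c}(a))=(x\mapsto axa^{-1})$; $h^*_{\mathbf c}:N_{\mathbf c}\to H_{\mathbf c}$ a map with $h_{\mathbf c}\circ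 h^*_{\mathbf c}=\mathrm{id}$; $(b_1,\dots,b_n)\in Q^{\bar s}_{\mathbf c}$ iff $\sum_is_iF^{b_i}_{\mathbf c}\restriction\mathcal Z(H_{\mathbf c})=0$ ($\bar s\in\mathbb Z^n$); $\mathcal Z(H_{\mathbf c})$ reduced; $H^*_{\mathbf c}\le H_{\mathbf c}$, $H_{\mathbf c}=\bigcup_{x\in\mathcal Z(H_{\mathbf c})}H^*_{\mathbf c}x$, $\mathcal Z(H^*_{\mathbf c})=\mathcal Z(H_{\mathbf c})\cap H^*_{\mathbf c}$; $\mathbb P_{\mathbf c}$ = primes $p$ such that $\mathcal Z(H_{\mathbf c})$ has a nonzero element of $p$-power order (then so does $\mathcal Z(H^*_{\mathbf c})$) or $J_p$ embeds in $\mathcal Z(H_{\mathbf c})$ (then $J_p$ embeds in $\mathcal Z(H^*_{\mathbf c})$); $\mathcal Z(H_{\mathbf c})/\mathcal Z(H^*_{\mathbf c})$ torsion-free and $p$-divisible for all $p\notin\mathbb P_{\mathbf c}$. $\mathbf C^5_{\rm aut}$: pairs $(\mathbf c,\mathbf g)$, $\mathbf c\in\mathbf C^4_{\rm aut}$, $\mathbf g=(\mathbb G_{\mathbf g},(F^\ell_{\mathbf g})_{\ell\in L_{\mathbf c}})$ with $\mathbb G_{\mathbf g}$ reduced torsion-free abelian, no $J_p$ embeddable, $F^\ell_{\mathbf g}\in\operatorname{Aut}(\mathbb G_{\mathbf g})$, and $(b_i)\in Q^{\bar s}_{\mathbf c}\Rightarrow\sum_is_iF^{b_i}_{\mathbf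 g}=0$. $\mathbf M_{\mathbf c}$ (for $(\mathbf c,\mathbf g)\in\mathbf C^5_{\rm aut}$): pairs $(\mathbf m,\mathbf g)\in\mathbf C^5_{\rm aut}$ (same $\mathbf g$) with $L_{\mathbf m}=L_{\mathbf c}$, $N_{\mathbf m}=N_{\mathbf c}$, $H_{\mathbf c}\subseteq H_{\mathbf m}$, $h_{\mathbf c}\subseteq h_{\mathbf m}$, $h^*_{\mathbf m}=h^*_{\mathbf c}$, $F^\ell_{\mathbf c}\subseteq F^\ell_{\mathbf m}$, $Q^{\bar s}_{\mathbf m}=Q^{\bar s}_{\mathbf c}$, $H_{\mathbf m}$ generated by $\mathcal Z(H_{\mathbf m})\cup H_{\mathbf c}$, $\mathcal Z(H_{\mathbf c})=\mathcal Z(H_{\mathbf m})\cap H_{\mathbf c}$, $\mathbb P_{\mathbf m}=\mathbb P_{\mathbf c}$, $H^*_{\mathbf m}=H^*_{\mathbf c}$. $\mathbf m_1\le_{\mathbf c}\mathbf m_2$ means $H_{\mathbf m_1}\subseteq H_{\mathbf m_2}$, $h_{\mathbf m_1}\subseteq h_{\mathbf m_2}$, $F^\ell_{\mathbf m_1}\subseteq F^\ell_{\mathbf m_2}$ for all $\ell$. $\mathbf m'\in\mathbf M_{\mathbf c}$ is free over $(\mathbf c,\mathbf g)$ if there are injective homomorphisms $f_\xi:\mathbb G_{\mathbf g}\to\mathcal Z(H_{\mathbf m'})$ ($\xi<\zeta$) with $f_\xi\circ F^\ell_{\mathbf g}=F^\ell_{\mathbf m'}\circ f_\xi$ for all $\ell$,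 such that $\mathcal Z(H_{\mathbf m'})=\bigoplus_{\xi<\zeta}f_\xi(\mathbb G_{\mathbf g})\oplus\mathcal Z(H_{\mathbf c})$. $\mathbf m$ is $\mu$-free over $(\mathbf c,\mathbf g)$ if for every subgroup $G'$ of $\mathcal Z(H_{\mathbf m})/\mathcal Z(H_{\mathbf c})$ of cardinality $<\mu$ there is $\mathbf m'\in\mathbf M_{\mathbf c}$ with $\mathbf m'\le_{\mathbf c}\mathbf m$, free over $(\mathbf c,\mathbf g)$, and $G'\subseteq\mathcal Z(H_{\mathbf m'})/\mathcal Z(H_{\mathbf c})$. *)

theory Defs
  imports "HOL-Algebra.Algebra" "HOL-Computational_Algebra.Primes"
begin

definition center :: "('a, 'b) monoid_scheme \<Rightarrow> 'a set" where
  "center G = {z \<in> carrier G. \<forall>x\<in>carrier G. z \<otimes>\<^bsub>G\<^esub> x = x \<otimes>\<^bsub>G\<^esub> z}"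

definition Zgrp :: "('a, 'b) monoid_scheme \<Rightarrow> ('a, 'b) monoid_scheme" where
  "Zgrp G = G\<lparr>carrier := center G\<rparr>"

definition torsion_free :: "('a, 'b) monoid_scheme \<Rightarrow> bool" where
  "torsion_free G \<longleftrightarrow>
     (\<forall>x\<in>carrier G. \<forall>n::nat. n > 0 \<and> x [^]\<^bsub>G\<^esub> n = \<one>\<^bsub>G\<^esub> \<longrightarrow> x = \<one>\<^bsub>G\<^esub>)"

definition p_divisible :: "nat \<Rightarrow> ('a, 'b) monoid_scheme \<Rightarrow> bool" where
  "p_divisible p G \<longleftrightarrow> (\<forall>x\<in>carrier G. \<exists>y\<in>carrier G. y [^]\<^bsub>G\<^esub> p = x)"

definition divisible :: "('a, 'b) monoid_scheme \<Rightarrow> bool" where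
  "divisible G \<longleftrightarrow> (\<forall>n::nat. n > 0 \<longrightarrow> p_divisible n G)"

definition reduced :: "('a, 'b) monoid_scheme \<Rightarrow> bool" where
  "reduced G \<longleftrightarrow>
     (\<forall>D. subgroup D G \<and> divisible (G\<lparr>carrier := D\<rparr>) \<longrightarrow> D = {\<one>\<^bsub>G\<^esub>})"

definition has_p_torsion :: "nat \<Rightarrow> ('a, 'b) monoid_scheme \<Rightarrow> bool" where
  "has_p_torsion p G \<longleftrightarrow>
     (\<exists>x\<in>carrier G. x \<noteq> \<one>\<^bsub>G\<^esub> \<and> (\<exists>k::nat. x [^]\<^bsub>G\<^esub> (p ^ k) = \<one>\<^bsub>G\<^esub>))"

text \<open>The additive group of p-adic integers, as the inverse limit of the groups Z/p^n Z:
  compatible sequences of residues, with componentwise addition (written multiplicatively).\<close>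
definition Jp :: "nat \<Rightarrow> (nat \<Rightarrow> int) monoid" where
  "Jp p = \<lparr> carrier = {a. \<forall>n. 0 \<le> a n \<and> a n < int p ^ n \<and> a (Suc n) mod (int p ^ n) = a n},
            monoid.mult = (\<lambda>a b n. (a n + b n) mod (int p ^ n)),
            monoid.one = (\<lambda>n. 0) \<rparr>"

definition Jp_embeds :: "nat \<Rightarrow> ('a, 'b) monoid_scheme \<Rightarrow> bool" where
  "Jp_embeds p G \<longleftrightarrow> (\<exists>f. f \<in> hom (Jp p) G \<and> inj_on f (carrier (Jp p)))"

definition is_aut :: "('a, 'b) monoid_scheme \<Rightarrow> ('a \<Rightarrow> 'a) \<Rightarrow> bool" where
  "is_aut H \<phi> \<longleftrightarrow> \<phi> \<in> hom H H \<and> bij_betw \<phi> (carrier H) (carrier H)"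

text \<open>F : L \<rightarrow> Aut(H) an injective homomorphism (automorphisms compared on the carrier).\<close>
definition aut_action :: "('l, 'c) monoid_scheme \<Rightarrow> ('h, 'd) monoid_scheme \<Rightarrow> ('l \<Rightarrow> 'h \<Rightarrow> 'h) \<Rightarrow> bool" where
  "aut_action L H F \<longleftrightarrow>
     (\<forall>l\<in>carrier L. is_aut H (F l)) \<and>
     (\<forall>l1\<in>carrier L. \<forall>l2\<in>carrier L. \<forall>x\<in>carrier H. F (l1 \<otimes>\<^bsub>L\<^esub> l2) x = F l1 (F l2 x)) \<and>
     (\<forall>l1\<in>carrier L. \<forall>l2\<in>carrier L. (\<forall>x\<in>carrier H. F l1 x = F l2 x) \<longrightarrow> l1 = l2)"

text \<open>sum_i s_i F^{b_i} evaluated at z (in multiplicative notation: product of (F^{b_i} z)^{s_i}).\<close>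
definition lincomb :: "('a, 'b) monoid_scheme \<Rightarrow> ('l \<Rightarrow> 'a \<Rightarrow> 'a) \<Rightarrow> int list \<Rightarrow> 'l list \<Rightarrow> 'a \<Rightarrow> 'a" where
  "lincomb K F ss bs z =
     foldr (\<lambda>(s, b) acc. (F b z [^]\<^bsub>K\<^esub> s) \<otimes>\<^bsub>K\<^esub> acc) (zip ss bs) \<one>\<^bsub>K\<^esub>"

record ('l, 'h) c4rec =
  cL :: "'l monoid"
  cN :: "'l set"
  cH :: "'h monoid"
  ch :: "'h \<Rightarrow> 'l"
  chstar :: "'l \<Rightarrow> 'h"
  cF :: "'l \<Rightarrow> 'h \<Rightarrow> 'h"
  cHstar :: "'h set"
  cP :: "nat set"

record ('l, 'g) grec =
  gG :: "'g monoid"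
  gF :: "'l \<Rightarrow> 'g \<Rightarrow> 'g"

definition Qrel :: "('l, 'h) c4rec \<Rightarrow> int list \<Rightarrow> 'l list \<Rightarrow> bool" where
  "Qrel c ss bs \<longleftrightarrow>
     length ss = length bs \<and> set bs \<subseteq> carrier (cL c) \<and>
     (\<forall>z\<in>center (cH c). lincomb (cH c) (cF c) ss bs z = \<one>\<^bsub>cH c\<^esub>)"

definition C4aut :: "('l, 'h) c4rec \<Rightarrow> bool" where
  "C4aut c \<longleftrightarrow>
     group (cL c) \<and> group (cH c) \<and>
     aut_action (cL c) (cH c) (cF c) \<and>
     cN c \<lhd> cL c \<and>
     ch c \<in> hom (cH c) (cL c) \<and> ch c ` carrier (cH c) = cN c \<and>
     kernel (cH c) (cL c) (ch c) = center (cH c) \<and>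
     (\<forall>a\<in>carrier (cH c). \<forall>x\<in>carrier (cH c).
         cF c (ch c a) x = a \<otimes>\<^bsub>cH c\<^esub> x \<otimes>\<^bsub>cH c\<^esub> inv\<^bsub>cH c\<^esub> a) \<and>
     (\<forall>n\<in>cN c. chstar c n \<in> carrier (cH c) \<and> ch c (chstar c n) = n) \<and>
     reduced (Zgrp (cH c)) \<and>
     subgroup (cHstar c) (cH c) \<and>
     carrier (cH c) = (\<Union>x\<in>center (cH c). cHstar c #>\<^bsub>cH c\<^esub> x) \<and>
     center ((cH c)\<lparr>carrier := cHstar c\<rparr>) = center (cH c) \<inter> cHstar c \<and>
     (\<forall>p. p \<in> cP c \<longleftrightarrow> Factorial_Ring.prime p \<and> (has_p_torsion p (Zgrp (cH c)) \<or> Jp_embeds p (Zgrp (cH c)))) \<and>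
     (\<forall>p. Factorial_Ring.prime p \<and> has_p_torsion p (Zgrp (cH c)) \<longrightarrow>
          has_p_torsion p (Zgrp ((cH c)\<lparr>carrier := cHstar c\<rparr>))) \<and>
     (\<forall>p. Factorial_Ring.prime p \<and> Jp_embeds p (Zgrp (cH c)) \<longrightarrow>
          Jp_embeds p (Zgrp ((cH c)\<lparr>carrier := cHstar c\<rparr>))) \<and>
     torsion_free (Zgrp (cH c) Mod center ((cH c)\<lparr>carrier := cHstar c\<rparr>)) \<and>
     (\<forall>p. Factorial_Ring.prime p \<and> p \<notin> cP c \<longrightarrow>
          p_divisible p (Zgrp (cH c) Mod center ((cH c)\<lparr>carrier := cHstar c\<rparr>)))"

definition C5aut :: "('l, 'h) c4rec \<Rightarrow> ('l, 'g) grec \<Rightarrow> bool" where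
  "C5aut c g \<longleftrightarrow>
     C4aut c \<and>
     comm_group (gG g) \<and> reduced (gG g) \<and> torsion_free (gG g) \<and>
     (\<forall>p. Factorial_Ring.prime p \<longrightarrow> \<not> Jp_embeds p (gG g)) \<and>
     (\<forall>l\<in>carrier (cL c). is_aut (gG g) (gF g l)) \<and>
     (\<forall>ss bs. Qrel c ss bs \<longrightarrow> (\<forall>x\<in>carrier (gG g). lincomb (gG g) (gF g) ss bs x = \<one>\<^bsub>gG g\<^esub>))"

definition subgrp_ext :: "'h monoid \<Rightarrow> 'h monoid \<Rightarrow> bool" where
  "subgrp_ext H H' \<longleftrightarrow>
     carrier H \<subseteq> carrier H' \<and> \<one>\<^bsub>H\<^esub> = \<one>\<^bsub>H'\<^esub> \<and>
     (\<forall>x\<in>carrier H. \<forall>y\<in>carrier H. x \<otimes>\<^bsub>H\<^esub> y = x \<otimes>\<^bsub>H'\<^esub> y)"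

definition Mset :: "('l, 'h) c4rec \<Rightarrow> ('l, 'g) grec \<Rightarrow> ('l, 'h) c4rec \<Rightarrow> bool" where
  "Mset c g m \<longleftrightarrow>
     C5aut m g \<and>
     cL m = cL c \<and> cN m = cN c \<and>
     subgrp_ext (cH c) (cH m) \<and>
     (\<forall>a\<in>carrier (cH c). ch m a = ch c a) \<and>
     (\<forall>n\<in>cN c. chstar m n = chstar c n) \<and>
     (\<forall>l\<in>carrier (cL c). \<forall>x\<in>carrier (cH c). cF m l x = cF c l x) \<and>
     (\<forall>ss bs. Qrel m ss bs \<longleftrightarrow> Qrel c ss bs) \<and>
     carrier (cH m) = generate (cH m) (center (cH m) \<union> carrier (cH c)) \<and>
     center (cH c) = center (cH m) \<inter> carrier (cH c) \<and>
     cP m = cP c \<and> cHstar m = cHstar c"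

definition le_c :: "('l, 'h) c4rec \<Rightarrow> ('l, 'h) c4rec \<Rightarrow> ('l, 'h) c4rec \<Rightarrow> bool" where
  "le_c c m1 m2 \<longleftrightarrow>
     subgrp_ext (cH m1) (cH m2) \<and>
     (\<forall>a\<in>carrier (cH m1). ch m2 a = ch m1 a) \<and>
     (\<forall>l\<in>carrier (cL c). \<forall>x\<in>carrier (cH m1). cF m2 l x = cF m1 l x)"

text \<open>m' is free over (c,g): Z(H_m') is the internal direct sum of copies f_i(G_g) (i \<in> I)
  and Z(H_c), with each f_i an injective homomorphism commuting with the actions.
  The index set is taken inside the type 'h (no loss).\<close>
definition free_over :: "('l, 'h) c4rec \<Rightarrow> ('l, 'g) grec \<Rightarrow> ('l, 'h) c4rec \<Rightarrow> bool" where
  "free_over c g m' \<longleftrightarrow>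
     (\<exists>(I :: 'h set) (f :: 'h \<Rightarrow> 'g \<Rightarrow> 'h).
        (\<forall>i\<in>I. f i \<in> hom (gG g) (Zgrp (cH m')) \<and> inj_on (f i) (carrier (gG g)) \<and>
               (\<forall>l\<in>carrier (cL c). \<forall>x\<in>carrier (gG g). f i (gF g l x) = cF m' l (f i x))) \<and>
        (\<forall>z\<in>center (cH m').
           \<exists>!(a, y). a \<in> (I \<rightarrow>\<^sub>E carrier (gG g)) \<and> finite {i\<in>I. a i \<noteq> \<one>\<^bsub>gG g\<^esub>} \<and>
                     y \<in> center (cH c) \<and>
                     z = finprod (Zgrp (cH m')) (\<lambda>i. f i (a i)) {i\<in>I. a i \<noteq> \<one>\<^bsub>gG g\<^esub>}
                           \<otimes>\<^bsub>cH m'\<^esub> y))"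

text \<open>m is mu-free over (c,g); mu is a cardinal, given as a well-order relation.\<close>
definition mu_free :: "('l, 'h) c4rec \<Rightarrow> ('l, 'g) grec \<Rightarrow> 'x rel \<Rightarrow> ('l, 'h) c4rec \<Rightarrow> bool" where
  "mu_free c g mu m \<longleftrightarrow>
     (\<forall>G'. subgroup G' (Zgrp (cH m) Mod center (cH c)) \<and> |G'| <o mu \<longrightarrow>
        (\<exists>m'. Mset c g m' \<and> le_c c m' m \<and> free_over c g m' \<and>
              G' \<subseteq> {center (cH c) #>\<^bsub>Zgrp (cH m)\<^esub> x | x. x \<in> center (cH m')}))"

end

theory Submission
  imports Defs
begin

text \<open>
  Let \<open>\<phi> : N \<rightarrow> Z(H\<^sub>m)\<close> be a homomorphism. Its image modulo \<open>Z(H\<^sub>c)\<close> is a subgroup of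
  cardinality at most \<open>|N|\<close>, so \<open>|N|\<^sup>+\<close>-freeness provides a free \<open>m' \<le> m\<close> whose centre
  already contains \<open>\<phi>(N)\<close>. There \<open>Z(H\<^sub>m') = \<Oplus>\<^sub>\<xi> f\<^sub>\<xi>(G) \<oplus> Z(H\<^sub>c)\<close>, and each coordinate
  projection onto \<open>G\<close> is a homomorphism; composed with \<open>\<phi>\<close> it becomes a homomorphism
  \<open>N \<rightarrow> G\<close>, hence trivial. So every coordinate of \<open>\<phi>(n)\<close> in the free part vanishes and
  \<open>\<phi>(n) \<in> Z(H\<^sub>c)\<close>.
\<close>

lemma Zgrp_simps [simp]:
  "carrier (Zgrp H) = center H" "monoid.mult (Zgrp H) = monoid.mult H" "one (Zgrp H) = one H"
  by (simp_all add: Zgrp_def)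

lemma (in group) center_subgroup: "subgroup (center G) G"
proof (rule subgroupI)
  show "center G \<subseteq> carrier G" by (auto simp: center_def)
  show "center G \<noteq> {}" using one_closed by (auto simp: center_def)
next
  fix a assume a: "a \<in> center G"
  then have ac: "a \<in> carrier G" by (simp add: center_def)
  have "inv a \<otimes> x = x \<otimes> inv a" if x: "x \<in> carrier G" for x
  proof -
    have "inv a \<otimes> x = inv a \<otimes> (x \<otimes> a) \<otimes> inv a" using ac x by (simp add: m_assoc)
    also have "\<dots> = inv a \<otimes> (a \<otimes> x) \<otimes> inv a" using a x by (simp add: center_def)
    also have "\<dots> = x \<otimes> inv a" using ac x by (simp flip: m_assoc)
    finally show ?thesis .
  qed
  then show "inv a \<in> center G" using ac by (simp add: center_def)
next
  fix a b assume a: "a \<in> center G" and b: "b \<in> center G"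
  then have ac: "a \<in> carrier G" "b \<in> carrier G" by (simp_all add: center_def)
  have "a \<otimes> b \<otimes> x = x \<otimes> (a \<otimes> b)" if x: "x \<in> carrier G" for x
  proof -
    have "a \<otimes> b \<otimes> x = a \<otimes> (x \<otimes> b)" using ac x b by (simp add: m_assoc center_def)
    also have "\<dots> = x \<otimes> a \<otimes> b" using ac x a by (simp add: center_def flip: m_assoc)
    finally show ?thesis using ac x by (simp add: m_assoc)
  qed
  then show "a \<otimes> b \<in> center G" using ac by (simp add: center_def)
qed

lemma (in group) comm_group_Zgrp: "comm_group (Zgrp G)"
proof (rule group.group_comm_groupI)
  show "group (Zgrp G)" unfolding Zgrp_def by (rule subgroup_imp_group[OF center_subgroup])
  fix x y assume "x \<in> carrier (Zgrp G)" "y \<in> carrier (Zgrp G)"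
  then show "x \<otimes>\<^bsub>Zgrp G\<^esub> y = y \<otimes>\<^bsub>Zgrp G\<^esub> x" unfolding Zgrp_simps center_def by blast
qed

lemma subgrp_ext_imp_subgroup:
  assumes "group K" "group G" "subgrp_ext K G"
  shows "subgroup (carrier K) G"
proof -
  interpret K: group K by fact
  interpret G: group G by fact
  have sub: "carrier K \<subseteq> carrier G" and one: "\<one>\<^bsub>K\<^esub> = \<one>\<^bsub>G\<^esub>"
    and mult: "\<And>x y. x \<in> carrier K \<Longrightarrow> y \<in> carrier K \<Longrightarrow> x \<otimes>\<^bsub>K\<^esub> y = x \<otimes>\<^bsub>G\<^esub> y"
    using assms(3) by (auto simp: subgrp_ext_def)
  have inv: "inv\<^bsub>G\<^esub> x = inv\<^bsub>K\<^esub> x" if x: "x \<in> carrier K" for x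
    using x sub mult[of "inv\<^bsub>K\<^esub> x" x] one by (intro G.inv_equality) auto
  show ?thesis
    by (rule G.subgroupI) (use sub inv mult K.m_closed in auto)
qed

lemma hom_Zgrp_restrict:
  assumes ext: "subgrp_ext H' H" and \<phi>: "\<phi> \<in> hom K (Zgrp H)"
    and img: "\<phi> ` carrier K \<subseteq> carrier H'"
  shows "\<phi> \<in> hom K (Zgrp H')"
proof -
  have sub: "carrier H' \<subseteq> carrier H"
    and mult: "\<And>x y. x \<in> carrier H' \<Longrightarrow> y \<in> carrier H' \<Longrightarrow> x \<otimes>\<^bsub>H'\<^esub> y = x \<otimes>\<^bsub>H\<^esub> y"
    using ext by (auto simp: subgrp_ext_def)
  have central: "\<phi> x \<in> center H'" if x: "x \<in> carrier K" for x
  proof -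
    have "\<phi> x \<in> center H" using \<phi> x by (auto simp: hom_def)
    moreover have "\<phi> x \<in> carrier H'" using img x by blast
    ultimately show ?thesis using sub by (auto simp: center_def mult)
  qed
  have "\<phi> (x \<otimes>\<^bsub>K\<^esub> y) = \<phi> x \<otimes>\<^bsub>H'\<^esub> \<phi> y" if "x \<in> carrier K" "y \<in> carrier K" for x y
    using hom_mult[OF \<phi> that] img that by (simp add: mult image_subset_iff)
  then show ?thesis using central by (auto simp: hom_def)
qed

definition direct_decomposition ::
  "('z, 'b) monoid_scheme \<Rightarrow> ('g, 'c) monoid_scheme \<Rightarrow> 'i set \<Rightarrow> ('i \<Rightarrow> 'g \<Rightarrow> 'z) \<Rightarrow> 'z set \<Rightarrow>
    'z \<Rightarrow> ('i \<Rightarrow> 'g) \<Rightarrow> 'z \<Rightarrow> bool" where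
  "direct_decomposition Z G I f Y z a y \<longleftrightarrow>
     a \<in> I \<rightarrow>\<^sub>E carrier G \<and> finite {i\<in>I. a i \<noteq> \<one>\<^bsub>G\<^esub>} \<and> y \<in> Y \<and>
     z = finprod Z (\<lambda>i. f i (a i)) {i\<in>I. a i \<noteq> \<one>\<^bsub>G\<^esub>} \<otimes>\<^bsub>Z\<^esub> y"

locale internal_direct_sum = Z: comm_group Z + G: comm_group G
  for Z :: "('z, 'b) monoid_scheme" and G :: "('g, 'c) monoid_scheme"
    and I :: "'i set" and f :: "'i \<Rightarrow> 'g \<Rightarrow> 'z" and Y :: "'z set" +
  assumes f_hom: "i \<in> I \<Longrightarrow> f i \<in> hom G Z"
    and Y_subgroup: "subgroup Y Z"
    and decomposition_unique: "z \<in> carrier Z \<Longrightarrow> \<exists>!(a, y). direct_decomposition Z G I f Y z a y"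
begin

definition coordinates :: "'z \<Rightarrow> 'i \<Rightarrow> 'g" where
  "coordinates z = fst (THE (a, y). direct_decomposition Z G I f Y z a y)"

lemma coordinates_decomposition:
  assumes "z \<in> carrier Z"
  obtains y where "direct_decomposition Z G I f Y z (coordinates z) y"
proof -
  have "case (THE (a, y). direct_decomposition Z G I f Y z a y) of
          (a, y) \<Rightarrow> direct_decomposition Z G I f Y z a y"
    by (rule theI'[OF decomposition_unique[OF assms]])
  then show thesis using that by (auto simp: coordinates_def split: prod.splits)
qed

lemma coordinates_eq:
  assumes "z \<in> carrier Z" "direct_decomposition Z G I f Y z a y"
  shows "coordinates z = a"
proof -
  have "(THE (a, y). direct_decomposition Z G I f Y z a y) = (a, y)"
    by (rule the1_equality[OF decomposition_unique[OF assms(1)]]) (use assms(2) in simp)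
  then show ?thesis by (simp add: coordinates_def)
qed

lemma f_closed: "i \<in> I \<Longrightarrow> x \<in> carrier G \<Longrightarrow> f i x \<in> carrier Z"
  using hom_in_carrier[OF f_hom] .

lemma f_one: "i \<in> I \<Longrightarrow> f i \<one>\<^bsub>G\<^esub> = \<one>\<^bsub>Z\<^esub>"
  using hom_one[OF f_hom G.is_group Z.is_group] .

lemma finprod_support_extend:
  assumes b: "b \<in> I \<rightarrow>\<^sub>E carrier G" and supp: "{i\<in>I. b i \<noteq> \<one>\<^bsub>G\<^esub>} \<subseteq> T"
    and T: "T \<subseteq> I" "finite T"
  shows "finprod Z (\<lambda>i. f i (b i)) {i\<in>I. b i \<noteq> \<one>\<^bsub>G\<^esub>} = finprod Z (\<lambda>i. f i (b i)) T"
proof (rule Z.finprod_mono_neutral_cong_left[OF T(2) supp])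
  show "f i (b i) = \<one>\<^bsub>Z\<^esub>" if "i \<in> T - {i\<in>I. b i \<noteq> \<one>\<^bsub>G\<^esub>}" for i
    using that T f_one by auto
  show "(\<lambda>i. f i (b i)) \<in> T \<rightarrow> carrier Z" using b T f_closed by blast
qed simp

lemma decomposition_mult:
  assumes d1: "direct_decomposition Z G I f Y z1 a1 y1"
    and d2: "direct_decomposition Z G I f Y z2 a2 y2"
  shows "direct_decomposition Z G I f Y (z1 \<otimes>\<^bsub>Z\<^esub> z2) (\<lambda>i\<in>I. a1 i \<otimes>\<^bsub>G\<^esub> a2 i) (y1 \<otimes>\<^bsub>Z\<^esub> y2)"
proof -
  define a where "a = (\<lambda>i\<in>I. a1 i \<otimes>\<^bsub>G\<^esub> a2 i)"
  define supp where "supp b = {i\<in>I. b i \<noteq> \<one>\<^bsub>G\<^esub>}" for b :: "'i \<Rightarrow> 'g"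
  define T where "T = supp a1 \<union> supp a2"
  define \<Pi>T where "\<Pi>T b = finprod Z (\<lambda>i. f i (b i)) T" for b :: "'i \<Rightarrow> 'g"
  have a1: "a1 \<in> I \<rightarrow>\<^sub>E carrier G" and a2: "a2 \<in> I \<rightarrow>\<^sub>E carrier G"
    and y: "y1 \<in> Y" "y2 \<in> Y" and fin: "finite (supp a1)" "finite (supp a2)"
    and z1: "z1 = finprod Z (\<lambda>i. f i (a1 i)) (supp a1) \<otimes>\<^bsub>Z\<^esub> y1"
    and z2: "z2 = finprod Z (\<lambda>i. f i (a2 i)) (supp a2) \<otimes>\<^bsub>Z\<^esub> y2"
    using d1 d2 unfolding direct_decomposition_def supp_def by blast+
  have yc: "y1 \<in> carrier Z" "y2 \<in> carrier Z" using y subgroup.subset[OF Y_subgroup] by blast+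
  have T: "T \<subseteq> I" "finite T" using fin by (auto simp: T_def supp_def)
  have aE: "a \<in> I \<rightarrow>\<^sub>E carrier G" using a1 a2 unfolding a_def by fastforce
  have supp_a: "supp a \<subseteq> T" unfolding supp_def T_def a_def by (auto simp: G.l_one)
  have extend: "finprod Z (\<lambda>i. f i (b i)) (supp b) = \<Pi>T b"
    if "b \<in> I \<rightarrow>\<^sub>E carrier G" "supp b \<subseteq> T" for b
    using finprod_support_extend[OF that[unfolded supp_def] T] by (simp add: supp_def \<Pi>T_def)
  have summand_closed: "(\<lambda>i. f i (b i)) \<in> T \<rightarrow> carrier Z" if "b \<in> I \<rightarrow>\<^sub>E carrier G" for b
    using that T f_closed by blast
  have "\<Pi>T a = finprod Z (\<lambda>i. f i (a1 i) \<otimes>\<^bsub>Z\<^esub> f i (a2 i)) T"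
    unfolding \<Pi>T_def
  proof (rule Z.finprod_cong'[OF refl])
    show "f i (a i) = f i (a1 i) \<otimes>\<^bsub>Z\<^esub> f i (a2 i)" if "i \<in> T" for i
      using that T a1 a2 hom_mult[OF f_hom] unfolding a_def by (simp add: PiE_iff subset_iff)
  qed (use summand_closed[OF a1] summand_closed[OF a2] in \<open>auto intro: Z.m_closed\<close>)
  also have "\<dots> = \<Pi>T a1 \<otimes>\<^bsub>Z\<^esub> \<Pi>T a2"
    unfolding \<Pi>T_def by (rule Z.finprod_multf[OF summand_closed[OF a1] summand_closed[OF a2]])
  finally have "\<Pi>T a = \<Pi>T a1 \<otimes>\<^bsub>Z\<^esub> \<Pi>T a2" .
  moreover have "\<Pi>T a1 \<in> carrier Z" "\<Pi>T a2 \<in> carrier Z"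
    unfolding \<Pi>T_def using summand_closed[OF a1] summand_closed[OF a2]
    by (blast intro: Z.finprod_closed)+
  moreover have "supp a1 \<subseteq> T" "supp a2 \<subseteq> T" unfolding T_def by blast+
  ultimately have "z1 \<otimes>\<^bsub>Z\<^esub> z2 = finprod Z (\<lambda>i. f i (a i)) (supp a) \<otimes>\<^bsub>Z\<^esub> (y1 \<otimes>\<^bsub>Z\<^esub> y2)"
    using z1 z2 extend a1 a2 aE supp_a yc by (simp add: Z.m_ac)
  moreover have "finite (supp a)" using T(2) supp_a by (rule finite_subset[rotated])
  moreover have "y1 \<otimes>\<^bsub>Z\<^esub> y2 \<in> Y" using subgroup.m_closed[OF Y_subgroup y] .
  ultimately show ?thesis using aE unfolding direct_decomposition_def supp_def a_def by blast
qed

lemma coordinate_hom: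
  assumes "i \<in> I"
  shows "(\<lambda>z. coordinates z i) \<in> hom Z G"
proof (rule homI)
  fix z assume "z \<in> carrier Z"
  then obtain y where "direct_decomposition Z G I f Y z (coordinates z) y"
    by (rule coordinates_decomposition)
  then show "coordinates z i \<in> carrier G" using assms by (auto simp: direct_decomposition_def)
next
  fix z1 z2 assume z: "z1 \<in> carrier Z" "z2 \<in> carrier Z"
  obtain y1 where d1: "direct_decomposition Z G I f Y z1 (coordinates z1) y1"
    using z(1) by (rule coordinates_decomposition)
  obtain y2 where d2: "direct_decomposition Z G I f Y z2 (coordinates z2) y2"
    using z(2) by (rule coordinates_decomposition)
  have "coordinates (z1 \<otimes>\<^bsub>Z\<^esub> z2) = (\<lambda>i\<in>I. coordinates z1 i \<otimes>\<^bsub>G\<^esub> coordinates z2 i)"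
    using coordinates_eq[OF Z.m_closed[OF z] decomposition_mult[OF d1 d2]] .
  then show "coordinates (z1 \<otimes>\<^bsub>Z\<^esub> z2) i = coordinates z1 i \<otimes>\<^bsub>G\<^esub> coordinates z2 i"
    using assms by simp
qed

lemma coordinates_one_imp_mem:
  assumes z: "z \<in> carrier Z" and one: "\<forall>i\<in>I. coordinates z i = \<one>\<^bsub>G\<^esub>"
  shows "z \<in> Y"
proof -
  obtain y where d: "direct_decomposition Z G I f Y z (coordinates z) y"
    using z by (rule coordinates_decomposition)
  moreover have "{i\<in>I. coordinates z i \<noteq> \<one>\<^bsub>G\<^esub>} = {}" using one by auto
  ultimately have "y \<in> Y" and "z = \<one>\<^bsub>Z\<^esub> \<otimes>\<^bsub>Z\<^esub> y"
    by (simp_all add: direct_decomposition_def)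
  then show ?thesis using subgroup.subset[OF Y_subgroup] by auto
qed

lemma hom_image_subset_Y:
  assumes \<phi>: "\<phi> \<in> hom K Z"
    and trivial: "\<forall>\<psi>\<in>hom K G. \<forall>x\<in>carrier K. \<psi> x = \<one>\<^bsub>G\<^esub>"
  shows "\<phi> ` carrier K \<subseteq> Y"
proof
  fix z assume "z \<in> \<phi> ` carrier K"
  then obtain x where x: "x \<in> carrier K" and z: "z = \<phi> x" by blast
  have "coordinates (\<phi> x) i = \<one>\<^bsub>G\<^esub>" if "i \<in> I" for i
    using trivial hom_compose[OF \<phi> coordinate_hom[OF that]] x by (simp add: comp_def)
  moreover have "\<phi> x \<in> carrier Z" using \<phi> x by (rule hom_in_carrier)
  ultimately show "z \<in> Y" using coordinates_one_imp_mem z by blast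
qed

end

lemma Mset_group: "Mset c g m \<Longrightarrow> group (cH m)"
  by (simp add: Mset_def C5aut_def C4aut_def)

lemma Mset_subgrp_ext: "Mset c g m \<Longrightarrow> subgrp_ext (cH c) (cH m)"
  by (simp add: Mset_def)

lemma Mset_center_subgroup:
  assumes "C5aut c g" "Mset c g m"
  shows "subgroup (center (cH c)) (Zgrp (cH m))"
proof -
  have Hc: "group (cH c)" using assms(1) by (simp add: C5aut_def C4aut_def)
  interpret Hm: group "cH m" using Mset_group[OF assms(2)] .
  have cen: "center (cH c) = center (cH m) \<inter> carrier (cH c)"
    using assms(2) by (simp add: Mset_def)
  have "subgroup (center (cH c)) (cH m)"
    unfolding cen
    by (rule Hm.subgroups_Inter_pair[OF Hm.center_subgroup
          subgrp_ext_imp_subgroup[OF Hc Hm.is_group Mset_subgrp_ext[OF assms(2)]]])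
  then show ?thesis
    unfolding Zgrp_def by (rule Hm.subgroup_incl[OF _ Hm.center_subgroup]) (use cen in blast)
qed

lemma direct_decomposition_Zgrp:
  "direct_decomposition (Zgrp H) G I f Y z a y \<longleftrightarrow>
     a \<in> I \<rightarrow>\<^sub>E carrier G \<and> finite {i\<in>I. a i \<noteq> \<one>\<^bsub>G\<^esub>} \<and> y \<in> Y \<and>
     z = finprod (Zgrp H) (\<lambda>i. f i (a i)) {i\<in>I. a i \<noteq> \<one>\<^bsub>G\<^esub>} \<otimes>\<^bsub>H\<^esub> y"
  by (simp add: direct_decomposition_def)

lemma free_over_internal_direct_sum:
  fixes c :: "('l, 'h) c4rec" and g :: "('l, 'g) grec" and m :: "('l, 'h) c4rec"
  assumes c: "C5aut c g" and m: "Mset c g m" and free: "free_over c g m"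
  obtains I :: "'h set" and f where "internal_direct_sum (Zgrp (cH m)) (gG g) I f (center (cH c))"
proof -
  obtain I :: "'h set" and f where
    hom: "\<forall>i\<in>I. f i \<in> hom (gG g) (Zgrp (cH m))"
    and dec: "\<forall>z\<in>center (cH m).
      \<exists>!(a, y). direct_decomposition (Zgrp (cH m)) (gG g) I f (center (cH c)) z a y"
    using free unfolding free_over_def direct_decomposition_Zgrp by meson
  have "internal_direct_sum (Zgrp (cH m)) (gG g) I f (center (cH c))"
  proof (rule internal_direct_sum.intro)
    show "comm_group (Zgrp (cH m))" using group.comm_group_Zgrp[OF Mset_group[OF m]] .
    show "comm_group (gG g)" using c by (simp add: C5aut_def)
    show "internal_direct_sum_axioms (Zgrp (cH m)) (gG g) I f (center (cH c))"
      by (rule internal_direct_sum_axioms.intro) (use hom dec Mset_center_subgroup[OF c m] in simp_all)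
  qed
  then show thesis by (rule that)
qed

lemma mu_free_hom_into_free:
  assumes c: "C5aut c g" and m: "Mset c g m"
    and free: "mu_free c g (cardSuc (card_of (cN c))) m"
    and \<phi>: "\<phi> \<in> hom ((cL c)\<lparr>carrier := cN c\<rparr>) (Zgrp (cH m))"
  obtains m' where "Mset c g m'" "free_over c g m'"
    "\<phi> \<in> hom ((cL c)\<lparr>carrier := cN c\<rparr>) (Zgrp (cH m'))"
proof -
  let ?N = "(cL c)\<lparr>carrier := cN c\<rparr>" and ?Z = "Zgrp (cH m)" and ?Y = "center (cH c)"
  have "group (cL c)" "cN c \<lhd> cL c" using c by (simp_all add: C5aut_def C4aut_def)
  then have N: "group ?N" by (blast intro: group.subgroup_imp_group normal_imp_subgroup)
  interpret Z: comm_group ?Z using group.comm_group_Zgrp[OF Mset_group[OF m]] .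
  have Y: "subgroup ?Y ?Z" using Mset_center_subgroup[OF c m] .
  interpret Y: normal ?Y ?Z using Z.subgroup_imp_normal[OF Y] .
  define q where "q = (\<lambda>a. ?Y #>\<^bsub>?Z\<^esub> a) \<circ> \<phi>"
  have "group_hom ?N (?Z Mod ?Y) q"
    unfolding q_def
    by (intro group_hom.intro group_hom_axioms.intro N Y.factorgroup_is_group
          hom_compose[OF \<phi> Y.r_coset_hom_Mod])
  then have "subgroup (q ` cN c) (?Z Mod ?Y)" using group_hom.img_is_subgroup by fastforce
  moreover have "card_of (q ` cN c) <o cardSuc (card_of (cN c))"
    using ordLeq_ordLess_trans[OF card_of_image cardSuc_greater[OF card_of_Card_order]] .
  ultimately obtain m' where m': "Mset c g m'" "le_c c m' m" "free_over c g m'"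
    and cosets: "q ` cN c \<subseteq> {?Y #>\<^bsub>?Z\<^esub> x | x. x \<in> center (cH m')}"
    using free unfolding mu_free_def by blast
  interpret Hm': group "cH m'" using Mset_group[OF m'(1)] .
  have ext: "subgrp_ext (cH m') (cH m)" using m'(2) by (simp add: le_c_def)
  have "\<phi> n \<in> carrier (cH m')" if n: "n \<in> cN c" for n
  proof -
    obtain x where x: "x \<in> center (cH m')" and "?Y #>\<^bsub>?Z\<^esub> \<phi> n = ?Y #>\<^bsub>?Z\<^esub> x"
      using cosets n unfolding q_def by auto
    moreover have "\<phi> n \<in> carrier ?Z" using hom_in_carrier[OF \<phi>] n by simp
    ultimately have "\<phi> n \<in> ?Y #>\<^bsub>?Z\<^esub> x" using Z.repr_independenceD[OF Y] by metis
    then obtain y where y: "y \<in> ?Y" and \<phi>n: "\<phi> n = y \<otimes>\<^bsub>cH m\<^esub> x" unfolding r_coset_def by auto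
    have "carrier (cH c) \<subseteq> carrier (cH m')"
      using Mset_subgrp_ext[OF m'(1)] by (simp add: subgrp_ext_def)
    then have "y \<in> carrier (cH m')" "x \<in> carrier (cH m')" using x y by (auto simp: center_def)
    then show ?thesis using \<phi>n ext Hm'.m_closed by (simp add: subgrp_ext_def)
  qed
  then have "\<phi> \<in> hom ?N (Zgrp (cH m'))" using hom_Zgrp_restrict[OF ext \<phi>] by auto
  with m'(1,3) show thesis by (rule that)
qed

theorem lemma4p3:
  fixes c :: "('l, 'h) c4rec" and g :: "('l, 'g) grec" and m :: "('l, 'h) c4rec"
  assumes "C5aut c g"
    and "\<forall>\<phi>\<in>hom ((cL c)\<lparr>carrier := cN c\<rparr>) (gG g). \<forall>x\<in>cN c. \<phi> x = \<one>\<^bsub>gG g\<^esub>"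
    and "Mset c g m"
    and "mu_free c g (cardSuc (card_of (cN c))) m"
  shows "\<forall>\<phi>\<in>hom ((cL c)\<lparr>carrier := cN c\<rparr>) (Zgrp (cH m)). \<phi> ` cN c \<subseteq> carrier (cH c)"
proof
  fix \<phi> assume \<phi>: "\<phi> \<in> hom ((cL c)\<lparr>carrier := cN c\<rparr>) (Zgrp (cH m))"
  obtain m' where m': "Mset c g m'" "free_over c g m'"
    and \<phi>': "\<phi> \<in> hom ((cL c)\<lparr>carrier := cN c\<rparr>) (Zgrp (cH m'))"
    using mu_free_hom_into_free[OF assms(1,3,4) \<phi>] .
  obtain I :: "'h set" and f where "internal_direct_sum (Zgrp (cH m')) (gG g) I f (center (cH c))"
    using free_over_internal_direct_sum[OF assms(1) m'] .
  then have "\<phi> ` cN c \<subseteq> center (cH c)"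
    using internal_direct_sum.hom_image_subset_Y[OF _ \<phi>'] assms(2) by fastforce
  then show "\<phi> ` cN c \<subseteq> carrier (cH c)" by (auto simp: center_def)
qed

end
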